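(* Let $m,n$ be positive integers and let $u\in\{1,s_0,\dots,s_{m-1},t_1,\dots,t_{n-2}\}$. Then $$\deg_u(1)\le\deg_u(x_1)\le\dots\le\deg_u(x_{m-1})\le\deg_u(y_1)\le\dots\le\deg_u(y_{n-1})\le\deg_u(x_1y_1)\le\deg_u(x_1y_2)\le\dots\le\deg_u(x_1y_{n-1})\le\deg_u(x_2y_1)\le\dots\le\deg_u(x_{m-1}y_{n-1}).$$
   Context: Variables $s_0,\dots,s_{m-1},t_1,\dots,t_{n-2}$; $T=t_1\cdots t_{n-2}$. Monomials $x_i=s_1s_2\cdots s_i\,T^i$ for $1\le i\le m-1$ and $y_j=s_0s_1\cdots s_{m-1}\,T^{m-1}\,t_1\cdots t_{j-1}$ for $1\le j\le n-1$. For a monomial $M$ and a variable $u$, $\deg_u(M)$ is the exponent of $u$ in $M$ (and $\deg_1(M)$ is taken to be $0$). The products $x_iy_j$ are listed in lexicographic order of $(i,j)$. *)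

theory Defs
  imports Main
begin

text \<open>Variables: One stands for the symbol 1 (with deg_1 = 0), S k for s_k, T l for t_l.
  Monomials are represented by their exponent vectors (var => nat); product = pointwise sum.\<close>

datatype var = One | S nat | T nat

type_synonym monomial = "var \<Rightarrow> nat"

definition mono_one :: monomial where
  "mono_one = (\<lambda>_. 0)"

definition mono_mult :: "monomial \<Rightarrow> monomial \<Rightarrow> monomial" where
  "mono_mult M N = (\<lambda>v. M v + N v)"

text \<open>x_i = s_1 ... s_i T^i with T = t_1 ... t_{n-2}.\<close>
definition xmon :: "nat \<Rightarrow> nat \<Rightarrow> monomial" where
  "xmon n i v = (case v of
      One \<Rightarrow> 0
    | S k \<Rightarrow> (if 1 \<le> k \<and> k \<le> i then 1 else 0)
    | T l \<Rightarrow> (if 1 \<le> l \<and> l \<le> n - 2 then i else 0))"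

text \<open>y_j = s_0 s_1 ... s_{m-1} T^{m-1} t_1 ... t_{j-1}.\<close>
definition ymon :: "nat \<Rightarrow> nat \<Rightarrow> nat \<Rightarrow> monomial" where
  "ymon m n j v = (case v of
      One \<Rightarrow> 0
    | S k \<Rightarrow> (if k \<le> m - 1 then 1 else 0)
    | T l \<Rightarrow> (if 1 \<le> l \<and> l \<le> n - 2
               then (m - 1) + (if l \<le> j - 1 then 1 else 0) else 0))"

definition deg :: "var \<Rightarrow> monomial \<Rightarrow> nat" where
  "deg u M = (case u of One \<Rightarrow> 0 | _ \<Rightarrow> M u)"

definition mono_list :: "nat \<Rightarrow> nat \<Rightarrow> monomial list" where
  "mono_list m n =
     [mono_one] @ map (xmon n) [1..<m] @ map (ymon m n) [1..<n]
     @ [mono_mult (xmon n i) (ymon m n j). i \<leftarrow> [1..<m], j \<leftarrow> [1..<n]]"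

definition admissible_vars :: "nat \<Rightarrow> nat \<Rightarrow> var set" where
  "admissible_vars m n = {One} \<union> {S k | k. k < m} \<union> {T l | l. 1 \<le> l \<and> l \<le> n - 2}"

end

theory Submission
  imports Defs
begin

text \<open>Degrees are additive, so the degree sequence reads
  0, a(1), ..., a(m-1), b(1), ..., b(n-1), a(1) + b(1), ..., a(m-1) + b(n-1)
  with a(i) = deg_u(x_i) and b(j) = deg_u(y_j). For u = s_k the a(i) form a 0-1 step function
  and b(j) = 1; for u = t_l we have a(i) = i and b(j) is m-1 or m. In both cases the b(j)
  vary by at most what a(i) gains from one index to the next, which makes the lexicographic
  block of products sorted.\<close>

lemma sorted_wrt_uptI:
  assumes "\<And>i j. a \<le> i \<Longrightarrow> i < j \<Longrightarrow> j < b \<Longrightarrow> P i j"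
  shows "sorted_wrt P [a..<b]"
  using assms by (auto simp: sorted_wrt_iff_nth_less)

lemma sorted_concat:
  fixes xss :: "'a::linorder list list"
  assumes "\<forall>xs \<in> set xss. sorted xs"
    and "sorted_wrt (\<lambda>xs ys. \<forall>x \<in> set xs. \<forall>y \<in> set ys. x \<le> y) xss"
  shows "sorted (concat xss)"
  using assms by (induction xss) (auto simp: sorted_append)

lemma sorted_sum_sequence:
  fixes a b :: "nat \<Rightarrow> nat"
  assumes a_mono: "\<And>i i'. 1 \<le> i \<Longrightarrow> i < i' \<Longrightarrow> i' < m \<Longrightarrow> a i \<le> a i'"
    and b_mono: "\<And>j j'. 1 \<le> j \<Longrightarrow> j < j' \<Longrightarrow> j' < n \<Longrightarrow> b j \<le> b j'"
    and a_le_b: "\<And>i j. 1 \<le> i \<Longrightarrow> i < m \<Longrightarrow> 1 \<le> j \<Longrightarrow> j < n \<Longrightarrow> a i \<le> b j"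
    and b_le_sum: "\<And>i j j'. 1 \<le> i \<Longrightarrow> i < m \<Longrightarrow> 1 \<le> j \<Longrightarrow> j < n \<Longrightarrow> 1 \<le> j' \<Longrightarrow> j' < n
      \<Longrightarrow> b j \<le> a i + b j'"
    and sum_lex: "\<And>i i' j j'. 1 \<le> i \<Longrightarrow> i < i' \<Longrightarrow> i' < m \<Longrightarrow> 1 \<le> j \<Longrightarrow> j < n
      \<Longrightarrow> 1 \<le> j' \<Longrightarrow> j' < n \<Longrightarrow> a i + b j \<le> a i' + b j'"
  shows "sorted (0 # map a [1..<m] @ map b [1..<n] @ [a i + b j. i \<leftarrow> [1..<m], j \<leftarrow> [1..<n]])"
proof -
  have "sorted (map a [1..<m])" "sorted (map b [1..<n])"
    using a_mono b_mono by (auto simp: sorted_map intro: sorted_wrt_uptI)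
  moreover have "sorted [a i + b j. i \<leftarrow> [1..<m], j \<leftarrow> [1..<n]]"
  proof (rule sorted_concat)
    show "\<forall>xs \<in> set (map (\<lambda>i. map (\<lambda>j. a i + b j) [1..<n]) [1..<m]). sorted xs"
      using b_mono by (auto simp: sorted_map intro!: sorted_wrt_uptI)
    show "sorted_wrt (\<lambda>xs ys. \<forall>x \<in> set xs. \<forall>y \<in> set ys. x \<le> y)
        (map (\<lambda>i. map (\<lambda>j. a i + b j) [1..<n]) [1..<m])"
      using sum_lex by (auto simp: sorted_wrt_map intro!: sorted_wrt_uptI)
  qed
  ultimately show ?thesis
    using a_le_b b_le_sum by (auto simp: sorted_append intro: order_trans[OF a_le_b le_add2])
qed

lemma deg_mono_one [simp]: "deg u mono_one = 0"
  by (simp add: deg_def mono_one_def split: var.split)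

lemma deg_mono_mult [simp]: "deg u (mono_mult M N) = deg u M + deg u N"
  by (simp add: deg_def mono_mult_def split: var.split)

lemma map_deg_mono_list:
  "map (deg u) (mono_list m n) =
     0 # map (\<lambda>i. deg u (xmon n i)) [1..<m] @ map (\<lambda>j. deg u (ymon m n j)) [1..<n]
       @ [deg u (xmon n i) + deg u (ymon m n j). i \<leftarrow> [1..<m], j \<leftarrow> [1..<n]]"
  by (simp add: mono_list_def map_concat comp_def)

lemma deg_S_xmon: "deg (S k) (xmon n i) = (if 1 \<le> k \<and> k \<le> i then 1 else 0)"
  by (simp add: deg_def xmon_def)

lemma deg_S_ymon: "k < m \<Longrightarrow> deg (S k) (ymon m n j) = 1"
  by (simp add: deg_def ymon_def)

lemma deg_T_xmon: "1 \<le> l \<Longrightarrow> l \<le> n - 2 \<Longrightarrow> deg (T l) (xmon n i) = i"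
  by (simp add: deg_def xmon_def)

lemma deg_T_ymon:
  "1 \<le> l \<Longrightarrow> l \<le> n - 2 \<Longrightarrow> deg (T l) (ymon m n j) = m - 1 + (if l < j then 1 else 0)"
  by (auto simp: deg_def ymon_def)

theorem mainTheorem18:
  fixes m n :: nat and u :: var
  assumes "0 < m" and "0 < n" and "u \<in> admissible_vars m n"
  shows "sorted (map (deg u) (mono_list m n))"
proof -
  from assms(3) consider "u = One" | k where "u = S k" "k < m"
    | l where "u = T l" "1 \<le> l" "l \<le> n - 2"
    unfolding admissible_vars_def by blast
  then show ?thesis
  proof cases
    case 1
    then show ?thesis
      unfolding map_deg_mono_list by (intro sorted_sum_sequence) (simp_all add: deg_def)
  next
    case 2
    then show ?thesis
      unfolding map_deg_mono_list by (intro sorted_sum_sequence) (simp_all add: deg_S_xmon deg_S_ymon)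
  next
    case 3
    then show ?thesis
      unfolding map_deg_mono_list by (intro sorted_sum_sequence) (auto simp: deg_T_xmon deg_T_ymon)
  qed
qed

end
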